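(* Let $\alpha_0=\arctan \sqrt{q/p}$. The stationary points, in the region $R=R_1\cup R_2$ of the $(\vartheta,\alpha)$-plane, of the first order differential system \[ \dot{\vartheta}=3\,\sin \vartheta \, \cos \vartheta \, \sin (\alpha-\vartheta), \qquad \dot{\alpha}=q\,\cos \alpha \, \cos \vartheta \,-\, p\,\sin \alpha \, \sin \vartheta \] are exactly \[ P_0=(\alpha_0,\alpha_0),\quad P_1=(\alpha_0,\alpha_0+\pi),\quad Q_1=\left(0,\tfrac{\pi}{2}\right),\quad Q_2=\left(0,\tfrac{3\pi}{2}\right),\quad Q_3=\left(\tfrac{\pi}{2},0\right),\quad Q_4=\left(\tfrac{\pi}{2},\pi\right). \] Moreover, $P_0$ is a spiral sink if $p+q\leq 17$, while it is a nodal sink if $p+q\geq 18$; $P_1$ is a spiral source if $p+q\leq 17$, while it is a nodal source if $p+q\geq 18$; the points $Q_1,Q_2,Q_3,Q_4$ are saddle points.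
   Context: Here $p,q$ are positive integers (the dimensions of the spheres in $SO(p+1)\times SO(q+1)$-invariant hypersurfaces ${\mathbb S}^p\times{\mathbb S}^q\times(a,b)\to{\mathbb R}^{p+1}\times{\mathbb R}^{q+1}$, $(w,z,s)\mapsto(x(s)w,y(s)z)$, with profile curve $(x(s),y(s))$ parametrized by arc length, $\alpha$ the angle of the profile curve with the $x$-axis, and $\vartheta$ the polar angle, $x=r\cos\vartheta$, $y=r\sin\vartheta$). The system above is the one whose trajectories correspond to biconservative profile curves, i.e. solutions of $3\dot\alpha+p\frac{\sin\alpha}{x}-q\frac{\cos\alpha}{y}=0$. The regions are $R_1=\{(\vartheta,\alpha): 0\le\vartheta\le\pi/2,\ \vartheta-\pi/2\le\alpha\le\vartheta+\pi/2\}$ and $R_2=\{(\vartheta,\alpha): 0\le\vartheta\le\pi/2,\ \vartheta+\pi/2\le\alpha\le\vartheta+3\pi/2\}$. *)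

theory Defs
  imports "HOL-Analysis.Analysis"
begin

definition thdot :: "real \<Rightarrow> real \<Rightarrow> real" where
  "thdot th al = 3 * sin th * cos th * sin (al - th)"

definition aldot :: "real \<Rightarrow> real \<Rightarrow> real \<Rightarrow> real \<Rightarrow> real" where
  "aldot p q th al = q * cos al * cos th - p * sin al * sin th"

definition R1 :: "(real \<times> real) set" where
  "R1 = {(th, al). 0 \<le> th \<and> th \<le> pi/2 \<and> th - pi/2 \<le> al \<and> al \<le> th + pi/2}"

definition R2 :: "(real \<times> real) set" where
  "R2 = {(th, al). 0 \<le> th \<and> th \<le> pi/2 \<and> th + pi/2 \<le> al \<and> al \<le> th + 3*pi/2}"

definition stationary :: "(real \<Rightarrow> real \<Rightarrow> real) \<Rightarrow> (real \<Rightarrow> real \<Rightarrow> real) \<Rightarrow> real \<times> real \<Rightarrow> bool" where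
  "stationary f g P \<longleftrightarrow> f (fst P) (snd P) = 0 \<and> g (fst P) (snd P) = 0"

definition jac_eigenvalues ::
  "(real \<Rightarrow> real \<Rightarrow> real) \<Rightarrow> (real \<Rightarrow> real \<Rightarrow> real) \<Rightarrow> real \<times> real \<Rightarrow> complex set" where
  "jac_eigenvalues f g P =
    (let a = deriv (\<lambda>t. f t (snd P)) (fst P);
         b = deriv (\<lambda>t. f (fst P) t) (snd P);
         c = deriv (\<lambda>t. g t (snd P)) (fst P);
         d = deriv (\<lambda>t. g (fst P) t) (snd P)
     in {z. (complex_of_real a - z) * (complex_of_real d - z) - complex_of_real (b * c) = 0})"

definition spiral_sink where
  "spiral_sink f g P \<longleftrightarrow> stationary f g P \<and>
     (\<forall>z\<in>jac_eigenvalues f g P. Im z \<noteq> 0 \<and> Re z < 0)"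

definition nodal_sink where
  "nodal_sink f g P \<longleftrightarrow> stationary f g P \<and>
     (\<forall>z\<in>jac_eigenvalues f g P. Im z = 0 \<and> Re z < 0)"

definition spiral_source where
  "spiral_source f g P \<longleftrightarrow> stationary f g P \<and>
     (\<forall>z\<in>jac_eigenvalues f g P. Im z \<noteq> 0 \<and> Re z > 0)"

definition nodal_source where
  "nodal_source f g P \<longleftrightarrow> stationary f g P \<and>
     (\<forall>z\<in>jac_eigenvalues f g P. Im z = 0 \<and> Re z > 0)"

definition saddle_point where
  "saddle_point f g P \<longleftrightarrow> stationary f g P \<and>
     (\<forall>z\<in>jac_eigenvalues f g P. Im z = 0) \<and>
     (\<exists>z\<in>jac_eigenvalues f g P. Re z < 0) \<and> (\<exists>z\<in>jac_eigenvalues f g P. Re z > 0)"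

end

theory Submission
  imports Defs
begin

text \<open>In the strip
  \<open>0 \<le> \<theta> \<le> \<pi>/2\<close> either \<open>\<theta> \<in> {0, \<pi>/2}\<close>, and the second equation makes \<open>cos \<alpha>\<close> resp.
  \<open>sin \<alpha>\<close> vanish, or \<open>\<alpha> \<equiv> \<theta> mod \<pi>\<close>, and the second equation becomes \<open>p tan\<^sup>2 \<theta> = q\<close>.
  On the lines \<open>\<alpha> \<equiv> \<theta> mod \<pi>\<close> the Jacobian is \<open>k [[-3, 3], [-(p+q), -(p+q)]]\<close> with
  \<open>k = cos (\<alpha> - \<theta>) sin \<theta> cos \<theta>\<close>: its determinant \<open>6(p+q)k\<^sup>2\<close> is positive, its trace has
  the sign of \<open>-k\<close>, and its discriminant \<open>k\<^sup>2((p+q)\<^sup>2 - 18(p+q) + 9)\<close> is negative exactly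
  when \<open>p + q \<le> 17\<close>. On the axes \<open>\<theta> \<in> {0, \<pi>/2}\<close> the Jacobian is triangular with diagonal
  entries of opposite signs.\<close>

definition char_roots :: "real \<Rightarrow> real \<Rightarrow> real \<Rightarrow> real \<Rightarrow> complex set" where
  "char_roots a b c d =
     {z. (complex_of_real a - z) * (complex_of_real d - z) - complex_of_real (b * c) = 0}"

lemma char_root_Re_Im:
  assumes "z \<in> char_roots a b c d"
  shows "(a - Re z) * (d - Re z) - (Im z)\<^sup>2 = b * c" and "Im z * (2 * Re z - (a + d)) = 0"
proof -
  have root: "(complex_of_real a - z) * (complex_of_real d - z) - complex_of_real (b * c) = 0"
    using assms by (simp add: char_roots_def)
  show "(a - Re z) * (d - Re z) - (Im z)\<^sup>2 = b * c"
    using arg_cong[OF root, of Re] by (simp add: power2_eq_square)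
  show "Im z * (2 * Re z - (a + d)) = 0"
    using arg_cong[OF root, of Im] by (simp add: algebra_simps)
qed

lemma Im_char_root_eq_0_iff:
  assumes "z \<in> char_roots a b c d"
  shows "Im z = 0 \<longleftrightarrow> (a - d)\<^sup>2 + 4 * b * c \<ge> 0"
proof
  assume "Im z = 0"
  then have "(a - d)\<^sup>2 + 4 * b * c = (2 * Re z - (a + d))\<^sup>2"
    using char_root_Re_Im(1)[OF assms] by (simp add: power2_eq_square algebra_simps)
  then show "(a - d)\<^sup>2 + 4 * b * c \<ge> 0" by simp
next
  assume disc: "(a - d)\<^sup>2 + 4 * b * c \<ge> 0"
  show "Im z = 0"
  proof (rule ccontr)
    assume "Im z \<noteq> 0"
    then have "Re z = (a + d) / 2" and "(Im z)\<^sup>2 > 0"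
      using char_root_Re_Im(2)[OF assms] by auto
    then have "a - Re z = (a - d) / 2" and "d - Re z = - ((a - d) / 2)" by (simp_all add: field_simps)
    then have "b * c = - ((a - d) / 2)\<^sup>2 - (Im z)\<^sup>2"
      using char_root_Re_Im(1)[OF assms] by (simp only: power2_eq_square)
    then have "(a - d)\<^sup>2 + 4 * b * c = - 4 * (Im z)\<^sup>2"
      by (simp add: power_divide)
    with disc \<open>(Im z)\<^sup>2 > 0\<close> show False by simp
  qed
qed

lemma Re_char_root_times_trace_pos:
  assumes "z \<in> char_roots a b c d" and "a * d - b * c > 0" and "a + d \<noteq> 0"
  shows "Re z * (a + d) > 0"
proof (cases "Im z = 0")
  case True
  then have "Re z * (a + d) = (Re z)\<^sup>2 + (a * d - b * c)"
    using char_root_Re_Im(1)[OF assms(1)] by (simp add: power2_eq_square algebra_simps)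
  with assms(2) show ?thesis by (simp add: add_nonneg_pos)
next
  case False
  then have "Re z = (a + d) / 2"
    using char_root_Re_Im(2)[OF assms(1)] by simp
  then have "Re z * (a + d) = (a + d)\<^sup>2 / 2" by (simp add: power2_eq_square)
  moreover have "(a + d)\<^sup>2 > 0" using assms(3) by simp
  ultimately show ?thesis by linarith
qed

lemma char_roots_triangular:
  assumes "b * c = 0"
  shows "char_roots a b c d = {complex_of_real a, complex_of_real d}"
  using assms by (auto simp: char_roots_def)

lemma deriv_thdot_th:
  "deriv (\<lambda>t. thdot t al) th = 3 * cos (2 * th) * sin (al - th) - 3 * sin th * cos th * cos (al - th)"
  unfolding thdot_def cos_double
  by (rule DERIV_imp_deriv, (rule derivative_eq_intros refl)+, simp add: power2_eq_square algebra_simps)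

lemma deriv_thdot_al: "deriv (\<lambda>t. thdot th t) al = 3 * sin th * cos th * cos (al - th)"
  unfolding thdot_def
  by (rule DERIV_imp_deriv, (rule derivative_eq_intros refl)+, simp)

lemma deriv_aldot_th:
  "deriv (\<lambda>t. aldot p q t al) th = - (q * cos al * sin th + p * sin al * cos th)"
  unfolding aldot_def
  by (rule DERIV_imp_deriv, (rule derivative_eq_intros refl)+, simp add: algebra_simps)

lemma deriv_aldot_al:
  "deriv (\<lambda>t. aldot p q th t) al = - (q * sin al * cos th + p * cos al * sin th)"
  unfolding aldot_def
  by (rule DERIV_imp_deriv, (rule derivative_eq_intros refl)+, simp add: algebra_simps)

lemma jac_eigenvalues_system:
  "jac_eigenvalues thdot (aldot p q) (th, al) =
     char_roots (3 * cos (2 * th) * sin (al - th) - 3 * sin th * cos th * cos (al - th))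
       (3 * sin th * cos th * cos (al - th))
       (- (q * cos al * sin th + p * sin al * cos th))
       (- (q * sin al * cos th + p * cos al * sin th))"
  unfolding jac_eigenvalues_def char_roots_def Let_def fst_conv snd_conv
  by (simp only: deriv_thdot_th deriv_thdot_al deriv_aldot_th deriv_aldot_al)

lemma stationary_system_iff:
  "stationary thdot (aldot p q) (th, al) \<longleftrightarrow>
     sin th * cos th * sin (al - th) = 0 \<and> q * cos al * cos th = p * sin al * sin th"
  by (auto simp: stationary_def thdot_def aldot_def)

lemma sin_cos_add_2_int_pi:
  "sin (x + 2 * of_int k * pi) = sin x \<and> cos (x + 2 * of_int k * pi) = cos x"
  by (subst sin_cos_eq_iff) (auto simp: algebra_simps)

lemma stationary_system_shift:
  "stationary thdot (aldot p q) (th, al + 2 * of_int k * pi) = stationary thdot (aldot p q) (th, al)"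
proof -
  have "al + 2 * of_int k * pi - th = (al - th) + 2 * of_int k * pi" by simp
  then show ?thesis by (simp only: stationary_system_iff sin_cos_add_2_int_pi)
qed

lemma arctan_sqrt_bounds:
  fixes p q :: real assumes "p > 0" "q > 0"
  shows "0 < arctan (sqrt (q / p))" and "arctan (sqrt (q / p)) < pi / 2"
  using assms arctan_ubound by simp_all

lemma eq_arctan_sqrt_iff:
  fixes p q th :: real assumes "p > 0" "q > 0" "0 < th" "th < pi / 2"
  shows "th = arctan (sqrt (q / p)) \<longleftrightarrow> p * (sin th)\<^sup>2 = q * (cos th)\<^sup>2"
proof -
  have "cos th > 0" "sin th > 0" using assms by (auto intro: cos_gt_zero sin_gt_zero)
  then have "tan th > 0" by (simp add: tan_def)
  have "th = arctan (sqrt (q / p)) \<longleftrightarrow> tan th = sqrt (q / p)"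
    using assms arctan_tan[of th] tan_arctan by auto
  also have "\<dots> \<longleftrightarrow> (tan th)\<^sup>2 = q / p"
    using \<open>tan th > 0\<close> by (auto simp: real_sqrt_unique)
  also have "\<dots> \<longleftrightarrow> p * (sin th)\<^sup>2 = q * (cos th)\<^sup>2"
    using assms \<open>cos th > 0\<close> by (simp add: tan_def power_divide field_simps)
  finally show ?thesis .
qed

lemma int_times_pi_cases:
  fixes x y :: real assumes "y = of_int n * pi + x"
  obtains k :: int where "y = x + 2 * of_int k * pi" | k :: int where "y = x + pi + 2 * of_int k * pi"
proof (cases "even n")
  case True
  then obtain k where "n = 2 * k" by blast
  then show ?thesis using assms that(1)[of k] by (simp add: algebra_simps)
next
  case False
  then obtain k where "n = 2 * k + 1" by (blast elim: oddE)
  then show ?thesis using assms that(2)[of k] by (simp add: algebra_simps)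
qed

lemma stationary_system_points:
  fixes p q :: real assumes "p > 0" "q > 0"
  defines "a0 \<equiv> arctan (sqrt (q / p))"
  shows "\<forall>P\<in>{(a0, a0), (a0, a0 + pi), (0, pi/2), (0, 3*pi/2), (pi/2, 0), (pi/2, pi)}.
           stationary thdot (aldot p q) P"
proof -
  have "0 < a0" "a0 < pi/2" using arctan_sqrt_bounds[OF assms(1,2)] by (simp_all add: a0_def)
  then have "p * (sin a0)\<^sup>2 = q * (cos a0)\<^sup>2"
    using eq_arctan_sqrt_iff[OF assms(1,2), of a0] by (simp add: a0_def)
  moreover have "sin (3*pi/2) = -1" "cos (3*pi/2) = 0"
    using sin_3over2_pi cos_3over2_pi by (simp_all add: field_simps)
  ultimately show ?thesis
    by (simp add: stationary_system_iff power2_eq_square algebra_simps)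
qed

lemma stationary_system_interior_cases:
  fixes p q :: real
  assumes "p > 0" "q > 0" "0 < th" "th < pi/2" and stat: "stationary thdot (aldot p q) (th, al)"
  obtains k :: int where "th = arctan (sqrt (q / p))" "al = th + 2 * of_int k * pi"
    | k :: int where "th = arctan (sqrt (q / p))" "al = th + pi + 2 * of_int k * pi"
proof -
  have sin_diff: "sin th * cos th * sin (al - th) = 0"
    and balance: "q * cos al * cos th = p * sin al * sin th"
    using stat by (simp_all add: stationary_system_iff)
  have "sin th > 0" "cos th > 0" using assms(3,4) by (auto intro: sin_gt_zero cos_gt_zero)
  with sin_diff have "sin (al - th) = 0" by simp
  then obtain n :: int where al_n: "al = n * pi + th" by (auto simp: sin_zero_iff_int2 algebra_simps)
  have th_eq: "th = arctan (sqrt (q / p))" if "sin al = s * sin th" "cos al = s * cos th" "s\<^sup>2 = 1" for s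
  proof -
    have "p * (sin th)\<^sup>2 = q * (cos th)\<^sup>2"
      using balance that by (auto simp: power2_eq_square algebra_simps)
    then show ?thesis using eq_arctan_sqrt_iff[OF assms(1-4)] by simp
  qed
  from al_n show ?thesis
  proof (rule int_times_pi_cases)
    fix k :: int assume al: "al = th + 2 * of_int k * pi"
    then have "th = arctan (sqrt (q / p))" by (intro th_eq[of 1]) (simp_all add: sin_cos_add_2_int_pi)
    with al that(1) show ?thesis by blast
  next
    fix k :: int assume al: "al = th + pi + 2 * of_int k * pi"
    then have "th = arctan (sqrt (q / p))" by (intro th_eq[of "-1"]) (simp_all add: sin_cos_add_2_int_pi)
    with al that(2) show ?thesis by blast
  qed
qed

lemma stationary_system_in_strip_iff:
  fixes p q :: real assumes "p > 0" "q > 0" "0 \<le> th" "th \<le> pi/2"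
  defines "a0 \<equiv> arctan (sqrt (q / p))"
  shows "stationary thdot (aldot p q) (th, al) \<longleftrightarrow>
    (\<exists>P\<in>{(a0, a0), (a0, a0 + pi), (0, pi/2), (0, 3*pi/2), (pi/2, 0), (pi/2, pi)}.
       th = fst P \<and> (\<exists>k::int. al = snd P + 2 * of_int k * pi))"
    (is "_ \<longleftrightarrow> (\<exists>P\<in>?S. _)")
proof
  assume stat: "stationary thdot (aldot p q) (th, al)"
  then have balance: "q * cos al * cos th = p * sin al * sin th"
    by (simp add: stationary_system_iff)
  consider "th = 0" | "th = pi/2" | "0 < th \<and> th < pi/2" using assms(3,4) by linarith
  then show "\<exists>P\<in>?S. th = fst P \<and> (\<exists>k::int. al = snd P + 2 * of_int k * pi)"
  proof cases
    case 1
    with balance assms(2) have "cos al = 0" by simp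
    then obtain n :: int where "al = n * pi + pi/2" by (auto simp: cos_zero_iff_int2)
    then show ?thesis
      by (rule int_times_pi_cases) (use 1 in \<open>auto simp: algebra_simps\<close>)
  next
    case 2
    with balance assms(1) have "sin al = 0" by simp
    then obtain n :: int where "al = n * pi + 0" by (auto simp: sin_zero_iff_int2)
    then show ?thesis
      by (rule int_times_pi_cases) (use 2 in auto)
  next
    case 3
    then obtain k :: int where "th = a0" "al = a0 + 2 * of_int k * pi \<or> al = a0 + pi + 2 * of_int k * pi"
      using stationary_system_interior_cases[OF assms(1,2) _ _ stat] unfolding a0_def by metis
    then show ?thesis by auto
  qed
next
  assume "\<exists>P\<in>?S. th = fst P \<and> (\<exists>k::int. al = snd P + 2 * of_int k * pi)"
  then obtain P k where "P \<in> ?S" "th = fst P" "al = snd P + 2 * of_int k * pi" by blast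
  then show "stationary thdot (aldot p q) (th, al)"
    using stationary_system_points[OF assms(1,2)] stationary_system_shift
    by (metis a0_def prod.collapse)
qed

lemma jac_eigenvalues_system_on_diagonals:
  assumes "sin (al - th) = 0"
  defines "k \<equiv> cos (al - th) * sin th * cos th"
  shows "jac_eigenvalues thdot (aldot p q) (th, al) =
           char_roots (- 3 * k) (3 * k) (- (p + q) * k) (- (p + q) * k)"
proof -
  have "sin al = cos (al - th) * sin th" and "cos al = cos (al - th) * cos th"
    using sin_add[of th "al - th"] cos_add[of th "al - th"] assms(1) by (simp_all add: mult.commute)
  then show ?thesis
    unfolding jac_eigenvalues_system k_def using assms(1) by (simp add: algebra_simps)
qed

lemma Re_Im_jac_eigenvalue_on_diagonals:
  fixes p q :: real
  assumes "p + q > 0" "0 < th" "th < pi/2" "sin (al - th) = 0"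
    and z: "z \<in> jac_eigenvalues thdot (aldot p q) (th, al)"
  shows "Re z * cos (al - th) < 0" and "Im z = 0 \<longleftrightarrow> (p + q)\<^sup>2 - 18 * (p + q) + 9 \<ge> 0"
proof -
  define n where "n = p + q"
  define k where "k = cos (al - th) * sin th * cos th"
  have sc: "sin th > 0" "cos th > 0" using assms(2,3) by (simp_all add: sin_gt_zero cos_gt_zero)
  have "(cos (al - th))\<^sup>2 = 1" using assms(4) sin_cos_squared_add[of "al - th"] by simp
  then have "k \<noteq> 0" using sc by (auto simp: k_def)
  then have k2: "k\<^sup>2 > 0" by simp
  have z': "z \<in> char_roots (- 3 * k) (3 * k) (- n * k) (- n * k)"
    using z unfolding jac_eigenvalues_system_on_diagonals[OF assms(4)] k_def n_def .
  have "(- 3 * k) * (- n * k) - (3 * k) * (- n * k) = 6 * n * k\<^sup>2"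
    by (simp add: power2_eq_square algebra_simps)
  then have det: "(- 3 * k) * (- n * k) - (3 * k) * (- n * k) > 0"
    using assms(1) k2 by (simp add: n_def)
  have "(3 + n) * k \<noteq> 0" using assms(1) \<open>k \<noteq> 0\<close> by (simp add: n_def)
  then have trace: "- 3 * k + - n * k \<noteq> 0" by (simp add: algebra_simps)
  have "Re z * (- 3 * k + - n * k) > 0"
    by (rule Re_char_root_times_trace_pos[OF z' det trace])
  then have "(Re z * cos (al - th)) * ((3 + n) * (sin th * cos th)) < 0"
    by (simp add: k_def algebra_simps)
  then show "Re z * cos (al - th) < 0" using assms(1) sc by (simp add: n_def mult_less_0_iff)
  have "(- 3 * k - - n * k)\<^sup>2 + 4 * (3 * k) * (- n * k) = k\<^sup>2 * (n\<^sup>2 - 18 * n + 9)"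
    by (simp add: power2_eq_square algebra_simps)
  then show "Im z = 0 \<longleftrightarrow> (p + q)\<^sup>2 - 18 * (p + q) + 9 \<ge> 0"
    using Im_char_root_eq_0_iff[OF z'] k2 by (simp add: n_def zero_le_mult_iff)
qed

lemma saddle_point_system_on_axes:
  fixes p q :: real
  assumes "p > 0" "q > 0" "th = 0 \<or> th = pi/2" and stat: "stationary thdot (aldot p q) (th, al)"
  shows "saddle_point thdot (aldot p q) (th, al)"
proof -
  define A where "A = 3 * cos (2 * th) * sin (al - th) - 3 * sin th * cos th * cos (al - th)"
  define D where "D = - (q * sin al * cos th + p * cos al * sin th)"
  have "sin th * cos th = 0" using assms(3) by (metis cos_pi_half mult_zero_left mult_zero_right sin_zero)
  then have eig: "jac_eigenvalues thdot (aldot p q) (th, al) = {complex_of_real A, complex_of_real D}"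
    unfolding jac_eigenvalues_system A_def D_def by (simp add: char_roots_triangular)
  have "A * D < 0"
    using assms(3)
  proof
    assume "th = 0"
    with stat assms(2) have "cos al = 0" by (simp add: stationary_system_iff)
    then have "(sin al)\<^sup>2 = 1" using sin_cos_squared_add[of al] by simp
    then show "A * D < 0" using \<open>th = 0\<close> assms(2) by (simp add: A_def D_def power2_eq_square)
  next
    assume "th = pi/2"
    with stat assms(1) have "sin al = 0" by (simp add: stationary_system_iff)
    then have "(cos al)\<^sup>2 = 1" using sin_cos_squared_add[of al] by simp
    moreover have "A * D = - 3 * p * (cos al)\<^sup>2"
      unfolding A_def D_def \<open>th = pi/2\<close> by (simp add: sin_diff power2_eq_square)
    ultimately show "A * D < 0" using assms(1) by simp
  qed
  then have "A < 0 \<and> D > 0 \<or> A > 0 \<and> D < 0" by (auto simp: mult_less_0_iff)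
  then show ?thesis
    using stat unfolding saddle_point_def eig by auto
qed

lemma sq_minus_18_plus_9_neg_iff:
  fixes n :: nat assumes "n \<ge> 1"
  shows "(real n)\<^sup>2 - 18 * real n + 9 < 0 \<longleftrightarrow> n \<le> 17"
proof
  assume "n \<le> 17"
  then have "(real n - 1) * (17 - real n) \<ge> 0" using assms by simp
  then show "(real n)\<^sup>2 - 18 * real n + 9 < 0" by (simp add: power2_eq_square algebra_simps)
next
  assume "(real n)\<^sup>2 - 18 * real n + 9 < 0"
  then have "real n * (real n - 18) < 0" by (simp add: power2_eq_square algebra_simps)
  then show "n \<le> 17" by (simp add: mult_less_0_iff)
qed

theorem lemma4p4:
  fixes p q :: nat
  assumes "p > 0" and "q > 0"
  defines "a0 \<equiv> arctan (sqrt (real q / real p))"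
  defines "f \<equiv> thdot" and "g \<equiv> aldot (real p) (real q)"
  defines "P0 \<equiv> (a0, a0)" and "P1 \<equiv> (a0, a0 + pi)"
  defines "Q1 \<equiv> (0, pi/2)" and "Q2 \<equiv> (0, 3*pi/2)"
  defines "Q3 \<equiv> (pi/2, 0)" and "Q4 \<equiv> (pi/2, pi)"
  shows "{P0, P1, Q1, Q2, Q3, Q4} \<subseteq> R1 \<union> R2
    \<and> (\<forall>P\<in>{P0, P1, Q1, Q2, Q3, Q4}. stationary f g P)
    \<and> (\<forall>th al. (th, al) \<in> R1 \<union> R2 \<longrightarrow>
          (stationary f g (th, al) \<longleftrightarrow>
            (\<exists>P\<in>{P0, P1, Q1, Q2, Q3, Q4}. th = fst P \<and> (\<exists>k::int. al = snd P + 2 * of_int k * pi))))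
    \<and> (p + q \<le> 17 \<longrightarrow> spiral_sink f g P0 \<and> spiral_source f g P1)
    \<and> (p + q \<ge> 18 \<longrightarrow> nodal_sink f g P0 \<and> nodal_source f g P1)
    \<and> saddle_point f g Q1 \<and> saddle_point f g Q2 \<and> saddle_point f g Q3 \<and> saddle_point f g Q4"
proof -
  have p: "real p > 0" and q: "real q > 0" using assms(1,2) by simp_all
  have a0: "0 < a0" "a0 < pi/2" using arctan_sqrt_bounds[OF p q] by (simp_all add: a0_def)
  have points: "{P0, P1, Q1, Q2, Q3, Q4} =
      {(a0, a0), (a0, a0 + pi), (0, pi/2), (0, 3*pi/2), (pi/2, 0), (pi/2, pi)}"
    by (simp add: P0_def P1_def Q1_def Q2_def Q3_def Q4_def)
  have stat: "\<forall>P\<in>{P0, P1, Q1, Q2, Q3, Q4}. stationary f g P"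
    using stationary_system_points[OF p q] by (simp only: points f_def g_def a0_def)
  have strip: "(th, al) \<in> R1 \<union> R2 \<Longrightarrow> 0 \<le> th \<and> th \<le> pi/2" for th al
    by (auto simp: R1_def R2_def)
  have disc: "(real p + real q)\<^sup>2 - 18 * (real p + real q) + 9 \<ge> 0 \<longleftrightarrow> p + q \<ge> 18"
    using sq_minus_18_plus_9_neg_iff[of "p + q"] assms(1) by fastforce
  have eig0: "Re z < 0 \<and> (Im z = 0 \<longleftrightarrow> p + q \<ge> 18)" if "z \<in> jac_eigenvalues f g P0" for z
    using Re_Im_jac_eigenvalue_on_diagonals[of "real p" "real q" a0 a0 z] that p a0 disc
    by (simp add: f_def g_def P0_def)
  have eig1: "Re z > 0 \<and> (Im z = 0 \<longleftrightarrow> p + q \<ge> 18)" if "z \<in> jac_eigenvalues f g P1" for z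
    using Re_Im_jac_eigenvalue_on_diagonals[of "real p" "real q" a0 "a0 + pi" z] that p a0 disc
    by (simp add: f_def g_def P1_def)
  show ?thesis
  proof (intro conjI impI)
    show "{P0, P1, Q1, Q2, Q3, Q4} \<subseteq> R1 \<union> R2"
      using a0 by (auto simp: points R1_def R2_def)
    show "\<forall>P\<in>{P0, P1, Q1, Q2, Q3, Q4}. stationary f g P" by (fact stat)
    show "\<forall>th al. (th, al) \<in> R1 \<union> R2 \<longrightarrow> (stationary f g (th, al) \<longleftrightarrow>
            (\<exists>P\<in>{P0, P1, Q1, Q2, Q3, Q4}. th = fst P \<and> (\<exists>k::int. al = snd P + 2 * of_int k * pi)))"
      using stationary_system_in_strip_iff[OF p q] strip by (simp add: points f_def g_def a0_def)
    show "saddle_point f g Q1" "saddle_point f g Q2" "saddle_point f g Q3" "saddle_point f g Q4"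
      using stat unfolding f_def g_def Q1_def Q2_def Q3_def Q4_def
      by (auto intro: saddle_point_system_on_axes[OF p q])
  qed (use stat eig0 eig1 in \<open>auto simp: spiral_sink_def spiral_source_def nodal_sink_def nodal_source_def\<close>)
qed

end
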